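(* For every $n\ge1$: (i) $\displaystyle\sum_{[\pi]\in\mathfrak{C}_{2n}^o}x^{\operatorname{drop}_{oo}([\pi])}y^{\operatorname{drop}_{eo}([\pi])}=\sum_{[\pi']\in\mathfrak{C}_{2n-1}^o}x^{\operatorname{drop}_{oo}([\pi'])}y^{\operatorname{drop}_{eo}([\pi'])}\Big[\operatorname{drop}_{oo}([\pi'])x^{-1}y+\operatorname{drop}_{eo}([\pi'])+\big(n-\operatorname{drop}_{oo}([\pi'])-\operatorname{drop}_{eo}([\pi'])\big)y\Big];$ (ii) $\displaystyle\sum_{[\pi]\in\mathfrak{C}_{2n+1}^o}x^{\operatorname{drop}_{oo}([\pi])}y^{\operatorname{drop}_{eo}([\pi])}=\sum_{[\pi']\in\mathfrak{C}_{2n}^o}x^{\operatorname{drop}_{oo}([\pi'])}y^{\operatorname{drop}_{eo}([\pi'])}\Big[\operatorname{drop}_{oo}([\pi'])+\operatorname{drop}_{eo}([\pi'])xy^{-1}+\big(n-\operatorname{drop}_{oo}([\pi'])-\operatorname{drop}_{eo}([\pi'])\big)x\Big].$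
   Context: $x,y$ are formal variables. For $n\ge1$, a cycle on $[n]=\{1,\dots,n\}$ is an equivalence class $[\pi]$ of permutations $\pi=\pi_1\cdots\pi_n$ of $[n]$ (in one-line notation) under cyclic rotation of the entries; the set of cycles on $[n]$ is $\mathfrak{C}_n$. Each cycle is represented by the permutation $\pi$ with $\pi_1=1$, and indices are read modulo $n$. A drop of $[\pi]$ is a consecutive pair $(\pi_i,\pi_{i+1})$, $1\le i\le n$, with $\pi_i>\pi_{i+1}$. By convention, the unique cycle $[(1)]\in\mathfrak{C}_1$ has exactly one drop $(\star,1)$, where $\star$ is considered neither even nor odd. A drop $(a,b)$ is odd-odd if $a,b$ are both odd, and even-odd if $a$ is even and $b$ is odd; $\operatorname{drop}_{oo}([\pi])$ and $\operatorname{drop}_{eo}([\pi])$ are the numbers of odd-odd and even-odd drops of $[\pi]$. $\mathfrak{C}_n^o$ is the set of cycles $[\pi]\in\mathfrak{C}_n$ such that for every drop $(\pi_i,\pi_{i+1})$, the entry $\pi_{i+1}$ is odd. *)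

theory Defs
  imports Main
begin

text \<open>A cycle on [n] is represented by its unique representative permutation
(one-line notation, as a list) whose first entry is 1.\<close>
definition cycles :: "nat \<Rightarrow> nat list set" where
  "cycles n = {p. distinct p \<and> set p = {1..n} \<and> p \<noteq> [] \<and> hd p = 1}"

text \<open>For n = 1 the list [1] has no such pair; the conventional drop (star,1) is neither odd-odd
nor even-odd and has odd second entry, so it affects none of the notions below.\<close>
definition drops :: "nat list \<Rightarrow> (nat \<times> nat) list" where
  "drops p = filter (\<lambda>(a,b). a > b)
     (map (\<lambda>i. (p ! i, p ! ((i + 1) mod length p))) [0..<length p])"

definition drop_oo :: "nat list \<Rightarrow> nat" where
  "drop_oo p = length (filter (\<lambda>(a,b). odd a \<and> odd b) (drops p))"

definition drop_eo :: "nat list \<Rightarrow> nat" where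
  "drop_eo p = length (filter (\<lambda>(a,b). even a \<and> odd b) (drops p))"

definition cycles_o :: "nat \<Rightarrow> nat list set" where
  "cycles_o n = {p \<in> cycles n. \<forall>(a,b) \<in> set (drops p). odd b}"

end

theory Submission
  imports Defs "HOL-Library.Multiset"
begin

(* For m >= 2, every cycle in C_m^o arises exactly once from a cycle in C_(m-1)^o by inserting the
   maximum m into a gap (a, b) between cyclically consecutive entries with b odd: the new pair
   (m, b) is a drop, so b must be odd, whereas (a, m) is not a drop.  A cycle on [m-1] has
   floor(m/2) such gaps.  The insertion trades the pair (a, b) for the drop (m, b), which is
   odd-odd or even-odd according to the parity of m; so the monomial x^oo y^eo is multiplied by
   x or y and divided by x, y or 1 according as (a, b) was an odd-odd drop, an even-odd drop or
   no drop.  Summing over the n gaps of a cycle in C_(2n-1)^o or C_(2n)^o gives both identities. *)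

definition insert_after :: "nat \<Rightarrow> 'a \<Rightarrow> 'a list \<Rightarrow> 'a list" where
  "insert_after i m p = take (Suc i) p @ m # drop (Suc i) p"

(* Gap i of p lies between p ! i and its cyclic successor rotate1 p ! i. *)
definition odd_gaps :: "nat list \<Rightarrow> nat set" where
  "odd_gaps p = {i. i < length p \<and> odd (rotate1 p ! i)}"

definition odd_odd_drop :: "nat \<times> nat \<Rightarrow> bool" where
  "odd_odd_drop = (\<lambda>(a, b). b < a \<and> odd a \<and> odd b)"

definition even_odd_drop :: "nat \<times> nat \<Rightarrow> bool" where
  "even_odd_drop = (\<lambda>(a, b). b < a \<and> even a \<and> odd b)"

definition drop_weight :: "'a \<Rightarrow> 'a \<Rightarrow> nat \<times> nat \<Rightarrow> 'a::monoid_mult" where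
  "drop_weight x y z = (if odd_odd_drop z then x else if even_odd_drop z then y else 1)"

lemma drops_eq_filter_zip_rotate1: "drops p = filter (\<lambda>(a, b). b < a) (zip p (rotate1 p))"
proof -
  have "map (\<lambda>i. (p ! i, p ! ((i + 1) mod length p))) [0..<length p] = zip p (rotate1 p)"
    by (rule nth_equalityI) (simp_all add: nth_rotate1)
  then show ?thesis by (simp add: drops_def)
qed

lemma drop_oo_eq_length_filter: "drop_oo p = length (filter odd_odd_drop (zip p (rotate1 p)))"
  by (simp add: drop_oo_def odd_odd_drop_def drops_eq_filter_zip_rotate1 filter_filter
      case_prod_unfold conj_ac)

lemma drop_eo_eq_length_filter: "drop_eo p = length (filter even_odd_drop (zip p (rotate1 p)))"
  by (simp add: drop_eo_def even_odd_drop_def drops_eq_filter_zip_rotate1 filter_filter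
      case_prod_unfold conj_ac)

lemma prod_list_drop_weight:
  fixes x y :: "'a::comm_monoid_mult"
  shows "(\<Prod>z\<leftarrow>zs. drop_weight x y z) =
           x ^ length (filter odd_odd_drop zs) * y ^ length (filter even_odd_drop zs)"
  by (induction zs) (auto simp: drop_weight_def odd_odd_drop_def even_odd_drop_def mult_ac)

lemma drop_monomial_eq_prod_list:
  fixes x y :: "'a::comm_monoid_mult"
  shows "x ^ drop_oo p * y ^ drop_eo p = (\<Prod>z\<leftarrow>zip p (rotate1 p). drop_weight x y z)"
  by (simp add: prod_list_drop_weight drop_oo_eq_length_filter drop_eo_eq_length_filter)

lemma zip_rotate1_append:
  assumes "xs \<noteq> []"
  shows "zip (xs @ ys) (rotate1 (xs @ ys)) =
           zip (butlast xs) (tl xs) @ zip (last xs # ys) (ys @ [hd xs])"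
proof -
  have "rotate1 (xs @ ys) = tl xs @ ys @ [hd xs]"
    using assms by (simp add: rotate1_hd_tl)
  moreover have "xs @ ys = butlast xs @ last xs # ys"
    using assms by simp
  ultimately show ?thesis
    using assms by (metis length_butlast length_tl zip_append)
qed

lemma zip_Cons_append_singleton:
  "zip (a # ys) (ys @ [h]) = (a, hd (ys @ [h])) # zip ys (tl (ys @ [h]))"
  by (cases ys) simp_all

lemma mset_zip_rotate1_insert_after:
  assumes "i < length p"
  shows "mset (zip (insert_after i m p) (rotate1 (insert_after i m p))) + {#(p ! i, rotate1 p ! i)#}
       = mset (zip p (rotate1 p)) + {#(p ! i, m), (m, rotate1 p ! i)#}"
proof -
  define xs ys where "xs = take (Suc i) p" and "ys = drop (Suc i) p"
  have xs: "xs \<noteq> []" "last xs = p ! i" "hd xs = hd p"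
    using assms by (auto simp: xs_def take_Suc_conv_app_nth hd_append hd_conv_nth)
  have succ: "rotate1 p ! i = hd (ys @ [hd xs])"
  proof (cases "Suc i < length p")
    case True
    then show ?thesis by (simp add: ys_def nth_rotate1 hd_drop_conv_nth)
  next
    case False
    then have "Suc i = length p" using assms by simp
    moreover have "p \<noteq> []" using assms by auto
    ultimately show ?thesis using xs(3) by (simp add: ys_def nth_rotate1 hd_conv_nth)
  qed
  have "p = xs @ ys" "insert_after i m p = xs @ m # ys"
    by (simp_all add: xs_def ys_def insert_after_def)
  then show ?thesis
    unfolding xs(2)[symmetric] succ
    by (simp add: zip_rotate1_append[OF xs(1)] zip_Cons_append_singleton)
qed

lemma length_cycles: "p \<in> cycles L \<Longrightarrow> length p = L"
  unfolding cycles_def using distinct_card by fastforce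

lemma finite_cycles_o: "finite (cycles_o L)"
proof (rule finite_subset)
  show "cycles_o L \<subseteq> {p. set p \<subseteq> {1..L} \<and> length p = L}"
    using length_cycles by (auto simp: cycles_o_def cycles_def)
  show "finite {p. set p \<subseteq> {1..L} \<and> length p = L}"
    by (rule finite_lists_length_eq) simp
qed

lemma set_insert_after: "set (insert_after i m p) = insert m (set p)"
  by (metis insert_after_def append_take_drop_id set_append list.set(2) Un_insert_right)

lemma distinct_insert_after: "distinct (insert_after i m p) \<longleftrightarrow> distinct p \<and> m \<notin> set p"
proof -
  have "distinct (xs @ m # ys) \<longleftrightarrow> distinct (xs @ ys) \<and> m \<notin> set (xs @ ys)" for xs ys
    by auto
  then show ?thesis
    unfolding insert_after_def by (metis append_take_drop_id)
qed

lemma insert_after_in_cycles: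
  assumes "p \<in> cycles (m - 1)"
  shows "insert_after i m p \<in> cycles m"
proof -
  have p: "distinct p" "set p = {1..m - 1}" "p \<noteq> []" "hd p = 1"
    using assms by (auto simp: cycles_def)
  then have "hd p \<in> {1..m - 1}"
    by (metis hd_in_set)
  then have "m \<ge> 2"
    using p(4) by auto
  then have "insert m {1..m - 1} = {1..m}"
    by auto
  moreover have "m \<notin> set p"
    using p(2) \<open>m \<ge> 2\<close> by auto
  ultimately show ?thesis
    using p by (simp add: cycles_def set_insert_after distinct_insert_after)
      (simp add: insert_after_def)
qed

lemma insert_after_inj:
  assumes "m \<notin> set p" "m \<notin> set p'" "i < length p" "j < length p'"
    and "insert_after i m p = insert_after j m p'"
  shows "p = p' \<and> i = j"
proof -
  have "take (Suc i) p = take (Suc j) p' \<and> drop (Suc i) p = drop (Suc j) p'"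
    using assms(1,2,5) append_Cons_eq_iff[of m "take (Suc i) p" "drop (Suc i) p"]
    by (auto simp: insert_after_def dest: in_set_takeD in_set_dropD)
  then have "p = p'" and "take (Suc i) p = take (Suc j) p"
    by (metis append_take_drop_id)+
  then show ?thesis
    using assms(3,4) by (metis Suc_leI min.absorb2 length_take nat.inject)
qed

lemma cycles_insert_afterE:
  assumes "q \<in> cycles m" "m \<ge> 2"
  obtains p i where "p \<in> cycles (m - 1)" "i < m - 1" "q = insert_after i m p"
proof -
  have q: "distinct q" "set q = {1..m}" "hd q = 1"
    using assms(1) by (auto simp: cycles_def)
  then obtain xs ys where xs: "q = xs @ m # ys"
    using assms(2) by (metis atLeastAtMost_iff one_le_numeral order.trans order_refl split_list)
  have "xs \<noteq> []"
    using q(3) assms(2) xs by auto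
  define p where "p = xs @ ys"
  have "set p = {1..m} - {m}"
    using q(1,2) xs by (auto simp: p_def)
  also have "\<dots> = {1..m - 1}"
    by auto
  finally have "p \<in> cycles (m - 1)"
    using q xs \<open>xs \<noteq> []\<close> by (auto simp: cycles_def p_def)
  moreover have "length xs - 1 < m - 1"
    using \<open>xs \<noteq> []\<close> length_cycles[OF \<open>p \<in> cycles (m - 1)\<close>]
    by (simp add: p_def less_diff_conv2 Suc_leI)
  moreover have "q = insert_after (length xs - 1) m p"
    using \<open>xs \<noteq> []\<close> xs by (simp add: insert_after_def p_def)
  ultimately show thesis
    by (rule that)
qed

lemma cycles_o_iff:
  "p \<in> cycles_o L \<longleftrightarrow> p \<in> cycles L \<and> (\<forall>(a, b) \<in> set (zip p (rotate1 p)). b < a \<longrightarrow> odd b)"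
  by (auto simp: cycles_o_def drops_eq_filter_zip_rotate1)

lemma gap_ends_less:
  assumes "p \<in> cycles (m - 1)" "i < length p"
  shows "p ! i < m" "rotate1 p ! i < m"
proof -
  have "p ! i \<in> set p" "rotate1 p ! i \<in> set p"
    using assms(2) by (metis nth_mem, metis length_rotate1 nth_mem set_rotate1)
  then show "p ! i < m" "rotate1 p ! i < m"
    using assms(1) by (auto simp: cycles_def)
qed

lemma insert_after_in_cycles_o_iff:
  assumes p: "p \<in> cycles (m - 1)" and i: "i < length p"
  shows "insert_after i m p \<in> cycles_o m \<longleftrightarrow> p \<in> cycles_o (m - 1) \<and> odd (rotate1 p ! i)"
proof -
  define q where "q = insert_after i m p"
  define a b where "a = p ! i" and "b = rotate1 p ! i"
  have "a < m" "b < m"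
    using gap_ends_less[OF p i] by (simp_all add: a_def b_def)
  have pairs: "set (zip q (rotate1 q)) \<union> {(a, b)} = set (zip p (rotate1 p)) \<union> {(a, m), (m, b)}"
    using arg_cong[OF mset_zip_rotate1_insert_after[OF i, of m], of set_mset]
    by (simp add: q_def a_def b_def)
  have "(m, b) \<in> set (zip q (rotate1 q)) \<union> {(a, b)}"
    unfolding pairs by simp
  then have new_drop: "(m, b) \<in> set (zip q (rotate1 q))"
    using \<open>a < m\<close> by auto
  have q: "q \<in> cycles m"
    using insert_after_in_cycles[OF p] by (simp add: q_def)
  show ?thesis
    unfolding q_def[symmetric] b_def[symmetric]
  proof
    assume "q \<in> cycles_o m"
    then have drops_q: "odd v" if "(u, v) \<in> set (zip q (rotate1 q))" "v < u" for u v
      using that by (auto simp: cycles_o_iff)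
    then have "odd b"
      using new_drop \<open>b < m\<close> by blast
    moreover have "odd v" if "(u, v) \<in> set (zip p (rotate1 p))" "v < u" for u v
    proof -
      have "(u, v) \<in> set (zip q (rotate1 q)) \<or> (u, v) = (a, b)"
        using that(1) pairs by blast
      then show ?thesis
        using drops_q that(2) \<open>odd b\<close> by auto
    qed
    ultimately show "p \<in> cycles_o (m - 1) \<and> odd b"
      using p by (auto simp: cycles_o_iff)
  next
    assume asm: "p \<in> cycles_o (m - 1) \<and> odd b"
    then have drops_p: "odd v" if "(u, v) \<in> set (zip p (rotate1 p))" "v < u" for u v
      using that by (auto simp: cycles_o_iff)
    have "odd v" if "(u, v) \<in> set (zip q (rotate1 q))" "v < u" for u v
    proof -
      have "(u, v) \<in> set (zip p (rotate1 p)) \<or> (u, v) = (a, m) \<or> (u, v) = (m, b)"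
        using that(1) pairs by blast
      then show ?thesis
        using drops_p asm that(2) \<open>a < m\<close> by auto
    qed
    then show "q \<in> cycles_o m"
      using q by (auto simp: cycles_o_iff)
  qed
qed

lemma bij_betw_insert_after:
  assumes "m \<ge> 2"
  shows "bij_betw (\<lambda>(p, i). insert_after i m p)
           (SIGMA p:cycles_o (m - 1). odd_gaps p) (cycles_o m)"
proof (rule bij_betwI')
  have cyc: "p \<in> cycles (m - 1)" "m \<notin> set p" if "p \<in> cycles_o (m - 1)" for p
    using that by (auto simp: cycles_o_def cycles_def)
  fix u v
  assume u: "u \<in> (SIGMA p:cycles_o (m - 1). odd_gaps p)"
  then show "(\<lambda>(p, i). insert_after i m p) u \<in> cycles_o m"
    using cyc insert_after_in_cycles_o_iff by (auto simp: odd_gaps_def)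
  assume v: "v \<in> (SIGMA p:cycles_o (m - 1). odd_gaps p)"
  show "((\<lambda>(p, i). insert_after i m p) u = (\<lambda>(p, i). insert_after i m p) v) = (u = v)"
  proof (cases u, cases v)
    fix p i p' j
    assume "u = (p, i)" "v = (p', j)"
    then show ?thesis
      using u v cyc(2) insert_after_inj[of m p p' i j] by (auto simp: odd_gaps_def)
  qed
next
  fix q
  assume "q \<in> cycles_o m"
  then obtain p i where p: "p \<in> cycles (m - 1)" and "i < m - 1" "q = insert_after i m p"
    using cycles_insert_afterE[OF _ assms] by (auto simp: cycles_o_def)
  moreover have "i < length p"
    using p \<open>i < m - 1\<close> length_cycles by auto
  ultimately show "\<exists>u \<in> (SIGMA p:cycles_o (m - 1). odd_gaps p). q = (\<lambda>(p, i). insert_after i m p) u"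
    using \<open>q \<in> cycles_o m\<close> insert_after_in_cycles_o_iff by (auto simp: odd_gaps_def)
qed

lemma sum_cycles_o_insert_after:
  assumes "m \<ge> 2"
  shows "(\<Sum>q\<in>cycles_o m. f q) = (\<Sum>p\<in>cycles_o (m - 1). \<Sum>i\<in>odd_gaps p. f (insert_after i m p))"
proof -
  have "(\<Sum>q\<in>cycles_o m. f q) = (\<Sum>(p, i)\<in>(SIGMA p:cycles_o (m - 1). odd_gaps p). f (insert_after i m p))"
    using sum.reindex_bij_betw[OF bij_betw_insert_after[OF assms], of f]
    by (simp add: case_prod_unfold)
  also have "\<dots> = (\<Sum>p\<in>cycles_o (m - 1). \<Sum>i\<in>odd_gaps p. f (insert_after i m p))"
    by (rule sum.Sigma[symmetric]) (simp_all add: finite_cycles_o odd_gaps_def)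
  finally show ?thesis .
qed

lemma card_odd_atLeastAtMost: "card ({k::nat. odd k} \<inter> {1..L}) = Suc L div 2"
proof (induction L)
  case (Suc L)
  have "{k::nat. odd k} \<inter> {1..Suc L} =
          (if odd (Suc L) then insert (Suc L) else id) ({k. odd k} \<inter> {1..L})"
    by (auto simp: le_Suc_eq)
  then show ?case
    using Suc by auto
qed simp

lemma card_odd_gaps:
  assumes "p \<in> cycles L"
  shows "card (odd_gaps p) = Suc L div 2"
proof -
  have "card (odd_gaps p) = length (filter odd (rotate1 p))"
    by (simp add: odd_gaps_def length_filter_conv_card)
  also have "\<dots> = length (filter odd p)"
    by (cases p) simp_all
  also have "\<dots> = card ({k. odd k} \<inter> {1..L})"
    using assms by (simp add: cycles_def distinct_length_filter)
  finally show ?thesis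
    by (simp only: card_odd_atLeastAtMost)
qed

lemma sum_inverse_drop_weight_odd_gaps:
  fixes x y :: "'a::field"
  shows "(\<Sum>i\<in>odd_gaps p. inverse (drop_weight x y (p ! i, rotate1 p ! i))) =
           of_nat (drop_oo p) * inverse x + of_nat (drop_eo p) * inverse y
           + (of_nat (card (odd_gaps p)) - of_nat (drop_oo p) - of_nat (drop_eo p))"
proof -
  define zs where "zs = zip p (rotate1 p)"
  have gap_pair: "(p ! i, rotate1 p ! i) = zs ! i" if "i \<in> odd_gaps p" for i
    using that by (simp add: zs_def odd_gaps_def)
  have drop_gaps: "odd_gaps p \<inter> {i. P (zs ! i)} = {i. i < length zs \<and> P (zs ! i)}"
    if "\<And>z. P z \<Longrightarrow> odd (snd z)" for P
    using that by (auto simp: zs_def odd_gaps_def)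
  have "inverse (drop_weight x y z) =
          1 + of_bool (odd_odd_drop z) * (inverse x - 1) + of_bool (even_odd_drop z) * (inverse y - 1)"
    for z
    by (auto simp: drop_weight_def odd_odd_drop_def even_odd_drop_def)
  then have "(\<Sum>i\<in>odd_gaps p. inverse (drop_weight x y (p ! i, rotate1 p ! i))) =
      of_nat (card (odd_gaps p))
      + of_nat (card (odd_gaps p \<inter> {i. odd_odd_drop (zs ! i)})) * (inverse x - 1)
      + of_nat (card (odd_gaps p \<inter> {i. even_odd_drop (zs ! i)})) * (inverse y - 1)"
    by (simp add: gap_pair sum.distrib sum_distrib_right[symmetric] odd_gaps_def)
  also have "odd_gaps p \<inter> {i. odd_odd_drop (zs ! i)} = {i. i < length zs \<and> odd_odd_drop (zs ! i)}"
    by (rule drop_gaps) (auto simp: odd_odd_drop_def)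
  also have "odd_gaps p \<inter> {i. even_odd_drop (zs ! i)} = {i. i < length zs \<and> even_odd_drop (zs ! i)}"
    by (rule drop_gaps) (auto simp: even_odd_drop_def)
  finally show ?thesis
    by (simp add: zs_def drop_oo_eq_length_filter drop_eo_eq_length_filter length_filter_conv_card
        ring_distribs)
qed

lemma drop_monomial_insert_after:
  fixes x y :: "'a::field"
  assumes p: "p \<in> cycles (m - 1)" and i: "i \<in> odd_gaps p" and "x \<noteq> 0" "y \<noteq> 0"
  shows "x ^ drop_oo (insert_after i m p) * y ^ drop_eo (insert_after i m p) =
           x ^ drop_oo p * y ^ drop_eo p * (if odd m then x else y)
           * inverse (drop_weight x y (p ! i, rotate1 p ! i))"
proof -
  define q where "q = insert_after i m p"
  define a b where "a = p ! i" and "b = rotate1 p ! i"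
  have "i < length p" "odd b"
    using i by (simp_all add: odd_gaps_def b_def)
  then have "a < m" "b < m"
    using gap_ends_less[OF p] by (simp_all add: a_def b_def)
  have "(\<Prod>z\<leftarrow>zip q (rotate1 q). drop_weight x y z) * drop_weight x y (a, b) =
          (\<Prod>z\<leftarrow>zip p (rotate1 p). drop_weight x y z) * drop_weight x y (a, m) * drop_weight x y (m, b)"
    using arg_cong[OF mset_zip_rotate1_insert_after[OF \<open>i < length p\<close>, of m],
        of "\<lambda>M. prod_mset (image_mset (drop_weight x y) M)"]
    by (simp add: q_def a_def b_def prod_mset_prod_list[symmetric] mult_ac)
  moreover have "drop_weight x y (a, m) = 1" "drop_weight x y (m, b) = (if odd m then x else y)"
    using \<open>a < m\<close> \<open>b < m\<close> \<open>odd b\<close>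
    by (auto simp: drop_weight_def odd_odd_drop_def even_odd_drop_def)
  moreover have "drop_weight x y (a, b) \<noteq> 0"
    using assms(3,4) by (simp add: drop_weight_def)
  ultimately show ?thesis
    unfolding q_def[symmetric] a_def[symmetric] b_def[symmetric] drop_monomial_eq_prod_list
    by (simp add: field_simps)
qed

lemma sum_cycles_o_step:
  fixes x y :: "'a::field"
  assumes "m \<ge> 2" "x \<noteq> 0" "y \<noteq> 0"
  shows "(\<Sum>q\<in>cycles_o m. x ^ drop_oo q * y ^ drop_eo q) =
           (\<Sum>p\<in>cycles_o (m - 1). x ^ drop_oo p * y ^ drop_eo p * (if odd m then x else y)
              * (of_nat (drop_oo p) * inverse x + of_nat (drop_eo p) * inverse y
                 + (of_nat (m div 2) - of_nat (drop_oo p) - of_nat (drop_eo p))))"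
  unfolding sum_cycles_o_insert_after[OF assms(1)]
proof (rule sum.cong[OF refl])
  fix p assume "p \<in> cycles_o (m - 1)"
  then have p: "p \<in> cycles (m - 1)"
    by (simp add: cycles_o_def)
  have "Suc (m - 1) div 2 = m div 2"
    using assms(1) by simp
  then show "(\<Sum>i\<in>odd_gaps p. x ^ drop_oo (insert_after i m p) * y ^ drop_eo (insert_after i m p)) =
      x ^ drop_oo p * y ^ drop_eo p * (if odd m then x else y)
      * (of_nat (drop_oo p) * inverse x + of_nat (drop_eo p) * inverse y
         + (of_nat (m div 2) - of_nat (drop_oo p) - of_nat (drop_eo p)))"
    using drop_monomial_insert_after[OF p _ assms(2,3)]
    by (simp add: sum_distrib_left[symmetric] sum_inverse_drop_weight_odd_gaps card_odd_gaps[OF p])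
qed

theorem lemma2p1:
  fixes x y :: "'a :: field" and n :: nat
  assumes "n \<ge> 1" and "x \<noteq> 0" and "y \<noteq> 0"
  shows "(\<Sum>p\<in>cycles_o (2*n). x ^ drop_oo p * y ^ drop_eo p) =
           (\<Sum>p\<in>cycles_o (2*n-1). x ^ drop_oo p * y ^ drop_eo p *
              (of_nat (drop_oo p) * inverse x * y + of_nat (drop_eo p)
               + (of_nat n - of_nat (drop_oo p) - of_nat (drop_eo p)) * y))
       \<and> (\<Sum>p\<in>cycles_o (2*n+1). x ^ drop_oo p * y ^ drop_eo p) =
           (\<Sum>p\<in>cycles_o (2*n). x ^ drop_oo p * y ^ drop_eo p *
              (of_nat (drop_oo p) + of_nat (drop_eo p) * x * inverse y
               + (of_nat n - of_nat (drop_oo p) - of_nat (drop_eo p)) * x))"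
proof -
  have even_weight: "f * y * (a * inverse x + b * inverse y + c) = f * (a * inverse x * y + b + c * y)"
    and odd_weight: "f * x * (a * inverse x + b * inverse y + c) = f * (a + b * x * inverse y + c * x)"
    for f a b c :: 'a
    using assms(2,3) by (simp_all add: field_simps)
  show ?thesis
    using sum_cycles_o_step[of "2 * n" x y] sum_cycles_o_step[of "2 * n + 1" x y] assms
    by (simp add: even_weight odd_weight)
qed

end
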